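(* There is an absolute constant $C>0$ such that the following holds. If $\zeta\le\min\{\frac12,\mathrm{ICR}\}$ and $(\gamma,\Delta)$ with $\gamma>0$, $\Delta\in[0,1)$ satisfy $\gamma<\frac{1+\Delta}{\zeta\sigma_{\max}^2}$ and $\frac{(1-\zeta)\gamma}{1-\Delta}\cdot\frac1n\operatorname{tr}(\boldsymbol A\boldsymbol A^T)<1$, then $\sqrt{\lambda_{2,\max}}\ge1-\frac{C\zeta}{\bar\kappa}$.
   Context: $\boldsymbol A\in\mathbb R^{n\times d}$; $\sigma_1^2\ge\dots\ge\sigma_n^2\ge0$ eigenvalues of $\boldsymbol A\boldsymbol A^T$, $\sigma_{\max}^2$ largest, $\sigma_{\min}^2$ smallest nonzero; $\bar\kappa=\frac{\frac1n\sum_j\sigma_j^2}{\sigma_{\min}^2}$, $\kappa=\sigma_{\max}^2/\sigma_{\min}^2$, $\mathrm{ICR}=\bar\kappa/\sqrt\kappa$. Batch fraction $\zeta\in(0,1]$. For $j\in[n]$: $\Omega_j=1-\gamma\zeta\sigma_j^2+\Delta$, $\lambda_{2,j}=\frac{-2\Delta+\Omega_j^2+\sqrt{\Omega_j^2(\Omega_j^2-4\Delta)}}{2}$ (complex root if the argument is negative); $\lambda_{2,\max}=\max\{|\lambda_{2,j}|:\sigma_j^2>0\}$. *)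

theory Defs
  imports Complex_Main "Jordan_Normal_Form.Char_Poly"
begin

definition mat_trace :: "real mat \<Rightarrow> real" where
  "mat_trace M = (\<Sum>i<dim_row M. M $$ (i, i))"

text \<open>The list s 0, ..., s (n-1) is the family of eigenvalues of A A^T counted
  with multiplicity (the roots of its characteristic polynomial).\<close>
definition eigvals_of :: "real mat \<Rightarrow> nat \<Rightarrow> (nat \<Rightarrow> real) \<Rightarrow> bool" where
  "eigvals_of M n s \<longleftrightarrow> char_poly M = (\<Prod>j<n. [:- s j, 1:])"

definition sig_max :: "nat \<Rightarrow> (nat \<Rightarrow> real) \<Rightarrow> real" where
  "sig_max n s = Max (s ` {..<n})"

definition sig_min :: "nat \<Rightarrow> (nat \<Rightarrow> real) \<Rightarrow> real" where
  "sig_min n s = Min {s j | j. j < n \<and> s j > 0}"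

definition kappa_bar :: "nat \<Rightarrow> (nat \<Rightarrow> real) \<Rightarrow> real" where
  "kappa_bar n s = ((\<Sum>j<n. s j) / real n) / sig_min n s"

definition kappa :: "nat \<Rightarrow> (nat \<Rightarrow> real) \<Rightarrow> real" where
  "kappa n s = sig_max n s / sig_min n s"

definition ICR :: "nat \<Rightarrow> (nat \<Rightarrow> real) \<Rightarrow> real" where
  "ICR n s = kappa_bar n s / sqrt (kappa n s)"

definition Omega :: "real \<Rightarrow> real \<Rightarrow> real \<Rightarrow> real \<Rightarrow> real" where
  "Omega \<gamma> \<zeta> \<Delta> sj = 1 - \<gamma> * \<zeta> * sj + \<Delta>"

text \<open>lambda_{2,j}; the square root is the complex principal root (csqrt),
  which is the real root if the argument is nonnegative.\<close>
definition lambda2 :: "real \<Rightarrow> real \<Rightarrow> real \<Rightarrow> real \<Rightarrow> complex" where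
  "lambda2 \<gamma> \<zeta> \<Delta> sj =
     (let \<Omega> = Omega \<gamma> \<zeta> \<Delta> sj in
      (complex_of_real (-2 * \<Delta> + \<Omega>\<^sup>2)
        + csqrt (complex_of_real (\<Omega>\<^sup>2 * (\<Omega>\<^sup>2 - 4 * \<Delta>)))) / 2)"

definition lambda2_max :: "nat \<Rightarrow> (nat \<Rightarrow> real) \<Rightarrow> real \<Rightarrow> real \<Rightarrow> real \<Rightarrow> real" where
  "lambda2_max n s \<gamma> \<zeta> \<Delta> = Max {cmod (lambda2 \<gamma> \<zeta> \<Delta> (s j)) | j. j < n \<and> s j > 0}"

end

theory Submission
  imports Defs
begin

text \<open>If the roots of z^2 - \<Omega> z + \<Delta> are real, sqrt |lambda2| is the larger root \<rho>, and
  the other root is at most sqrt \<Delta>; otherwise sqrt |lambda2| = sqrt \<Delta>. Evaluating the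
  polynomial at 1 gives 1 - \<Omega> + \<Delta> = \<gamma> \<zeta> s, so (1 - \<rho>) (1 - sqrt \<Delta>) \<le> \<gamma> \<zeta> s whenever
  \<rho> \<le> 1. For the smallest nonzero eigenvalue s = sig_min the trace condition, together with
  \<zeta> \<le> 1/2 and tr (A A^T) = sum of the eigenvalues (read off the characteristic polynomial),
  gives \<gamma> \<zeta> s < 2 (1 - \<Delta>) \<zeta> / kappa_bar. Dividing by 1 - sqrt \<Delta> = (1 - \<Delta>) / (1 + sqrt \<Delta>)
  yields 1 - \<rho> < 4 \<zeta> / kappa_bar, so C = 4 works.\<close>

lemma coeff_prod_linear_factors_subleading:
  fixes a :: "nat \<Rightarrow> 'a::comm_ring_1"
  assumes "n \<ge> 1"
  shows "coeff (\<Prod>i<n. [:- a i, 1:]) (n - 1) = - (\<Sum>i<n. a i)"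
  using assms
proof (induction n rule: dec_induct)
  case base
  show ?case by simp
next
  case (step n)
  have "coeff (\<Prod>i<n. [:- a i, 1:]) n = 1"
    using degree_prod_monic[of n "\<lambda>i. [:- a i, 1:]"] by (simp add: atLeast0LessThan)
  moreover obtain m where "n = Suc m" using step.hyps by (cases n) auto
  ultimately show ?case using step.IH by (simp add: algebra_simps)
qed

lemma char_poly_matrix_index:
  assumes "A \<in> carrier_mat n n" and "i < n" and "j < n"
  shows "char_poly_matrix A $$ (i, j) = (if i = j then [:- A $$ (i, i), 1:] else [:- A $$ (i, j):])"
  using assms unfolding char_poly_matrix_def by auto

text \<open>A permutation other than the identity moves at least two indices, so its
  term in the Leibniz expansion of the characteristic determinant has at most n - 2
  factors of degree one.\<close>
lemma degree_char_poly_matrix_perm_prod: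
  fixes A :: "'a::comm_ring_1 mat"
  assumes A: "A \<in> carrier_mat n n" and p: "p permutes {0..<n}" and "p \<noteq> id"
  shows "degree (\<Prod>i = 0..<n. char_poly_matrix A $$ (i, p i)) < n - 1"
proof -
  from p \<open>p \<noteq> id\<close> obtain i where i: "i < n" and pi: "p i \<noteq> i"
    by (metis atLeastLessThan_iff order_refl permutes_natset_le)
  have pi_n: "p i < n" using p i by (simp add: permutes_in_image)
  have ppi: "p (p i) \<noteq> p i" using pi p by (metis permutes_inj injD)
  have "degree (\<Prod>k = 0..<n. char_poly_matrix A $$ (k, p k))
      \<le> (\<Sum>k = 0..<n. degree (char_poly_matrix A $$ (k, p k)))"
    using degree_prod_sum_le[of "{0..<n}"] by (simp add: o_def)
  also have "\<dots> \<le> (\<Sum>k = 0..<n. if p k = k then 1 else 0)"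
    using A p by (intro sum_mono) (auto simp: char_poly_matrix_index permutes_in_image)
  also have "\<dots> = card {k \<in> {0..<n}. p k = k}"
    by (simp add: sum.If_cases Int_def conj_commute)
  also have "\<dots> \<le> card ({0..<n} - {i, p i})"
    using pi ppi by (intro card_mono) auto
  also have "\<dots> = n - 2"
    using i pi_n pi by (simp add: card_Diff_subset)
  finally show ?thesis using i pi_n pi by linarith
qed

lemma coeff_char_poly_subleading:
  fixes A :: "'a::comm_ring_1 mat"
  assumes A: "A \<in> carrier_mat n n" and "n \<ge> 1"
  shows "coeff (char_poly A) (n - 1) = - (\<Sum>i<n. A $$ (i, i))"
proof -
  let ?P = "{p. p permutes {0..<n}}"
  let ?t = "\<lambda>p. signof p * (\<Prod>i = 0..<n. char_poly_matrix A $$ (i, p i))"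
  have "coeff (char_poly A) (n - 1) = (\<Sum>p\<in>?P. coeff (?t p) (n - 1))"
    unfolding char_poly_def det_def'[OF char_poly_matrix_closed[OF A]] by (rule coeff_sum)
  also have "\<dots> = coeff (?t id) (n - 1)"
  proof (rule sum.remove[OF finite_permutations[OF finite_atLeastLessThan], THEN trans])
    show "id \<in> ?P" by (simp add: permutes_id)
    have "coeff (?t p) (n - 1) = 0" if "p \<in> ?P - {id}" for p
      using degree_char_poly_matrix_perm_prod[OF A] that by (simp add: coeff_eq_0)
    then show "coeff (?t id) (n - 1) + (\<Sum>p\<in>?P - {id}. coeff (?t p) (n - 1)) = coeff (?t id) (n - 1)"
      by simp
  qed
  also have "?t id = (\<Prod>i<n. [:- A $$ (i, i), 1:])"
    using A by (simp add: char_poly_matrix_index atLeast0LessThan)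
  finally show ?thesis
    using coeff_prod_linear_factors_subleading \<open>n \<ge> 1\<close> by simp
qed

lemma mat_trace_eq_sum_eigvals:
  assumes "M \<in> carrier_mat n n" and "n \<ge> 1" and "eigvals_of M n s"
  shows "mat_trace M = (\<Sum>j<n. s j)"
proof -
  have "- (\<Sum>j<n. s j) = coeff (char_poly M) (n - 1)"
    using assms(3) coeff_prod_linear_factors_subleading[OF \<open>n \<ge> 1\<close>, of s]
    by (simp add: eigvals_of_def)
  also have "\<dots> = - mat_trace M"
    using coeff_char_poly_subleading assms(1,2) by (simp add: mat_trace_def)
  finally show ?thesis by simp
qed

definition lambda2_Omega :: "real \<Rightarrow> real \<Rightarrow> complex" where
  "lambda2_Omega \<Omega> \<Delta> =
     (complex_of_real (-2 * \<Delta> + \<Omega>\<^sup>2) + csqrt (complex_of_real (\<Omega>\<^sup>2 * (\<Omega>\<^sup>2 - 4 * \<Delta>)))) / 2"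

lemma lambda2_eq_lambda2_Omega: "lambda2 \<gamma> \<zeta> \<Delta> sj = lambda2_Omega (Omega \<gamma> \<zeta> \<Delta> sj) \<Delta>"
  by (simp add: lambda2_def lambda2_Omega_def Let_def)

lemma sqrt_cmod_lambda2_Omega_real_roots:
  assumes "0 \<le> \<Omega>" and "4 * \<Delta> \<le> \<Omega>\<^sup>2"
  shows "sqrt (cmod (lambda2_Omega \<Omega> \<Delta>)) = (\<Omega> + sqrt (\<Omega>\<^sup>2 - 4 * \<Delta>)) / 2"
proof -
  define r where "r = sqrt (\<Omega>\<^sup>2 - 4 * \<Delta>)"
  have r: "0 \<le> r" "r\<^sup>2 = \<Omega>\<^sup>2 - 4 * \<Delta>" using assms(2) by (auto simp: r_def)
  have "csqrt (complex_of_real (\<Omega>\<^sup>2 * (\<Omega>\<^sup>2 - 4 * \<Delta>))) = complex_of_real (\<Omega> * r)"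
    using assms by (simp add: r_def real_sqrt_mult csqrt_of_real_nonneg)
  moreover have "(-2 * \<Delta> + \<Omega>\<^sup>2 + \<Omega> * r) / 2 = ((\<Omega> + r) / 2)\<^sup>2"
    using r(2) by (simp add: power2_eq_square field_simps)
  ultimately have "lambda2_Omega \<Omega> \<Delta> = complex_of_real (((\<Omega> + r) / 2)\<^sup>2)"
    unfolding lambda2_Omega_def by (metis of_real_add of_real_divide of_real_numeral)
  then have "cmod (lambda2_Omega \<Omega> \<Delta>) = ((\<Omega> + r) / 2)\<^sup>2"
    by (simp only: norm_of_real abs_power2)
  then show ?thesis using assms(1) r(1) unfolding r_def[symmetric] by simp
qed

lemma cmod_lambda2_Omega_complex_roots:
  assumes "0 \<le> \<Delta>" and "\<Omega>\<^sup>2 < 4 * \<Delta>"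
  shows "cmod (lambda2_Omega \<Omega> \<Delta>) = \<Delta>"
proof -
  define b where "b = sqrt (\<Omega>\<^sup>2 * (4 * \<Delta> - \<Omega>\<^sup>2))"
  have b: "b\<^sup>2 = \<Omega>\<^sup>2 * (4 * \<Delta> - \<Omega>\<^sup>2)" using assms(2) by (simp add: b_def)
  have "\<Omega>\<^sup>2 * (\<Omega>\<^sup>2 - 4 * \<Delta>) \<le> 0"
    using assms(2) by (simp add: mult_nonneg_nonpos)
  then have "csqrt (complex_of_real (\<Omega>\<^sup>2 * (\<Omega>\<^sup>2 - 4 * \<Delta>))) = \<i> * b"
    by (simp add: b_def abs_if algebra_simps)
  then have "lambda2_Omega \<Omega> \<Delta> = Complex ((-2 * \<Delta> + \<Omega>\<^sup>2) / 2) (b / 2)"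
    by (simp add: lambda2_Omega_def complex_eq_iff)
  moreover have "((-2 * \<Delta> + \<Omega>\<^sup>2) / 2)\<^sup>2 + (b / 2)\<^sup>2 = \<Delta>\<^sup>2"
    using b by (simp add: power_divide power2_eq_square field_simps)
  ultimately show ?thesis using assms(1) by (simp add: cmod_def)
qed

lemma one_minus_sqrt_cmod_lambda2_Omega:
  assumes "0 \<le> \<Omega>" and "0 \<le> \<Delta>" and "sqrt (cmod (lambda2_Omega \<Omega> \<Delta>)) \<le> 1"
  shows "(1 - sqrt (cmod (lambda2_Omega \<Omega> \<Delta>))) * (1 - sqrt \<Delta>) \<le> 1 - \<Omega> + \<Delta>"
proof (cases "4 * \<Delta> \<le> \<Omega>\<^sup>2")
  case True
  define r where "r = sqrt (\<Omega>\<^sup>2 - 4 * \<Delta>)"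
  define \<rho> where "\<rho> = (\<Omega> + r) / 2"
  define \<rho>' where "\<rho>' = (\<Omega> - r) / 2"
  have r: "0 \<le> r" "r\<^sup>2 = \<Omega>\<^sup>2 - 4 * \<Delta>" using True by (auto simp: r_def)
  have \<rho>: "sqrt (cmod (lambda2_Omega \<Omega> \<Delta>)) = \<rho>"
    using sqrt_cmod_lambda2_Omega_real_roots[OF assms(1) True] by (simp add: \<rho>_def r_def)
  have root_sum: "\<rho> + \<rho>' = \<Omega>" by (simp add: \<rho>_def \<rho>'_def field_simps)
  have root_prod: "\<rho>' * \<rho> = \<Delta>"
    using r(2) by (simp add: \<rho>_def \<rho>'_def power2_eq_square field_simps)
  have vieta: "1 - \<Omega> + \<Delta> = (1 - \<rho>) * (1 - \<rho>')"
    unfolding root_sum[symmetric] root_prod[symmetric] by (simp add: algebra_simps)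
  have "\<rho>' \<le> sqrt \<Delta>"
  proof (cases "\<rho>' \<le> 0")
    case False
    have "\<rho>'\<^sup>2 \<le> \<rho>' * \<rho>"
      using False r(1) by (simp add: power2_eq_square \<rho>_def \<rho>'_def mult_left_mono)
    also note root_prod
    finally show ?thesis by (rule real_le_rsqrt)
  qed (use order_trans real_sqrt_ge_zero assms(2) in blast)
  then show ?thesis
    using assms(3) unfolding \<rho> vieta by (intro mult_left_mono) auto
next
  case False
  then have "cmod (lambda2_Omega \<Omega> \<Delta>) = \<Delta>"
    using assms(2) by (intro cmod_lambda2_Omega_complex_roots) auto
  moreover have "\<Omega> \<le> 2 * sqrt \<Delta>"
    using False assms(2) real_le_rsqrt[of "\<Omega> / 2" \<Delta>] by (simp add: power_divide)
  ultimately show ?thesis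
    using assms(2) by (simp add: power2_eq_square algebra_simps)
qed

lemma sqrt_cmod_lambda2_Omega_ge:
  assumes "0 \<le> \<Delta>" and "\<Delta> < 1" and "0 < e" and gap: "1 - \<Omega> + \<Delta> < 2 * (1 - \<Delta>) * e"
  shows "1 - 4 * e \<le> sqrt (cmod (lambda2_Omega \<Omega> \<Delta>))"
proof -
  define \<rho> where "\<rho> = sqrt (cmod (lambda2_Omega \<Omega> \<Delta>))"
  define t where "t = sqrt \<Delta>"
  have t: "0 \<le> t" "t < 1" "t\<^sup>2 = \<Delta>" using assms(1,2) by (auto simp: t_def)
  consider "1 \<le> 4 * e" | "1 \<le> \<rho>" | "4 * e < 1" "\<rho> < 1" by linarith
  then show ?thesis
  proof cases
    case 1
    then show ?thesis using real_sqrt_ge_zero[OF norm_ge_zero, of "lambda2_Omega \<Omega> \<Delta>"] by linarith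
  next
    case 2
    then show ?thesis using assms(3) unfolding \<rho>_def by linarith
  next
    case 3
    have "(1 - \<Delta>) * (4 * e) < 1 - \<Delta>"
      using 3(1) assms(2) mult_strict_left_mono[of "4 * e" 1 "1 - \<Delta>"] by simp
    then have "0 \<le> \<Omega>" using gap assms(1) by linarith
    then have "(1 - \<rho>) * (1 - t) \<le> 1 - \<Omega> + \<Delta>"
      using one_minus_sqrt_cmod_lambda2_Omega assms(1) 3(2) by (simp add: \<rho>_def t_def)
    also have "\<dots> < (1 - t) * (2 * (1 + t) * e)"
      using gap unfolding t(3)[symmetric] by (simp add: power2_eq_square algebra_simps)
    finally have "1 - \<rho> < 2 * (1 + t) * e"
      using t(2) by (simp add: mult.commute)
    also have "\<dots> \<le> 4 * e" using t(2) assms(3) by simp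
    finally show ?thesis by (simp add: \<rho>_def)
  qed
qed

lemma sig_min_attained:
  assumes "\<exists>j<n. 0 < s j"
  obtains j where "j < n" and "s j = sig_min n s" and "0 < sig_min n s"
proof -
  have "finite {s j | j. j < n \<and> 0 < s j}" by simp
  then have "sig_min n s \<in> {s j | j. j < n \<and> 0 < s j}"
    unfolding sig_min_def using assms by (intro Min_in) auto
  then show ?thesis using that by auto
qed

lemma sig_min_le_sig_max:
  assumes "\<exists>j<n. 0 < s j"
  shows "sig_min n s \<le> sig_max n s"
proof -
  obtain j where "j < n" and "s j = sig_min n s" using assms by (rule sig_min_attained)
  then show ?thesis
    unfolding sig_max_def by (metis Max_ge finite_imageI finite_lessThan image_eqI lessThan_iff)
qed

lemma kappa_bar_pos:
  assumes "\<exists>j<n. 0 < s j" and "0 < \<zeta>" and "\<zeta> \<le> ICR n s"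
  shows "0 < kappa_bar n s"
proof -
  obtain j where "0 < sig_min n s" using assms(1) by (rule sig_min_attained)
  then have "0 < sqrt (kappa n s)"
    using sig_min_le_sig_max[OF assms(1)] by (simp add: kappa_def)
  moreover have "0 < ICR n s" using assms(2,3) by linarith
  ultimately show ?thesis by (simp add: ICR_def zero_less_divide_iff)
qed

lemma cmod_lambda2_le_lambda2_max:
  assumes "j < n" and "0 < s j"
  shows "cmod (lambda2 \<gamma> \<zeta> \<Delta> (s j)) \<le> lambda2_max n s \<gamma> \<zeta> \<Delta>"
proof -
  have "finite {cmod (lambda2 \<gamma> \<zeta> \<Delta> (s j)) | j. j < n \<and> 0 < s j}" by simp
  then show ?thesis unfolding lambda2_max_def using assms by (intro Max_ge) auto
qed

theorem proposition6:
  "\<exists>C::real. C > 0 \<and>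
    (\<forall>(A::real mat) n d (s::nat \<Rightarrow> real) (\<zeta>::real) (\<gamma>::real) (\<Delta>::real).
      A \<in> carrier_mat n d \<longrightarrow> n \<ge> 1 \<longrightarrow>
      eigvals_of (A * transpose_mat A) n s \<longrightarrow>
      (\<exists>j<n. s j > 0) \<longrightarrow>
      0 < \<zeta> \<longrightarrow> \<zeta> \<le> 1 \<longrightarrow> \<zeta> \<le> min (1/2) (ICR n s) \<longrightarrow>
      \<gamma> > 0 \<longrightarrow> 0 \<le> \<Delta> \<longrightarrow> \<Delta> < 1 \<longrightarrow>
      \<gamma> < (1 + \<Delta>) / (\<zeta> * sig_max n s) \<longrightarrow>
      (1 - \<zeta>) * \<gamma> / (1 - \<Delta>) * (mat_trace (A * transpose_mat A) / real n) < 1 \<longrightarrow>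
      sqrt (lambda2_max n s \<gamma> \<zeta> \<Delta>) \<ge> 1 - C * \<zeta> / kappa_bar n s)"
proof (rule exI[of _ 4], intro conjI allI impI)
  fix A :: "real mat" and n d and s :: "nat \<Rightarrow> real" and \<zeta> \<gamma> \<Delta> :: real
  assume A: "A \<in> carrier_mat n d" and "n \<ge> 1" and eig: "eigvals_of (A * transpose_mat A) n s"
    and pos: "\<exists>j<n. s j > 0" and "0 < \<zeta>" and "\<zeta> \<le> min (1/2) (ICR n s)"
    and "\<gamma> > 0" and "0 \<le> \<Delta>" and "\<Delta> < 1"
    and trace: "(1 - \<zeta>) * \<gamma> / (1 - \<Delta>) * (mat_trace (A * transpose_mat A) / real n) < 1"
  define m where "m = sig_min n s"
  define kb where "kb = kappa_bar n s"
  obtain j where j: "j < n" "s j = m" and "0 < m"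
    using pos unfolding m_def by (rule sig_min_attained)
  have "0 < kb" using kappa_bar_pos pos \<open>0 < \<zeta>\<close> \<open>\<zeta> \<le> min (1/2) (ICR n s)\<close> by (simp add: kb_def)
  have "mat_trace (A * transpose_mat A) / real n = kb * m"
    using mat_trace_eq_sum_eigvals[OF _ \<open>n \<ge> 1\<close> eig] A \<open>0 < m\<close>
    by (simp add: kb_def m_def kappa_bar_def)
  then have "(1 - \<zeta>) * (\<gamma> * kb * m) < 1 - \<Delta>"
    using trace \<open>\<Delta> < 1\<close> by (simp add: field_simps)
  moreover have "1 / 2 * (\<gamma> * kb * m) \<le> (1 - \<zeta>) * (\<gamma> * kb * m)"
    using \<open>\<zeta> \<le> min (1/2) (ICR n s)\<close> \<open>\<gamma> > 0\<close> \<open>0 < kb\<close> \<open>0 < m\<close> by (intro mult_right_mono) auto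
  ultimately have "\<gamma> * kb * m < 2 * (1 - \<Delta>)" by (simp add: algebra_simps)
  then have "\<gamma> * kb * m * (\<zeta> / kb) < 2 * (1 - \<Delta>) * (\<zeta> / kb)"
    using \<open>0 < kb\<close> \<open>0 < \<zeta>\<close> by (intro mult_strict_right_mono) auto
  moreover have "1 - Omega \<gamma> \<zeta> \<Delta> m + \<Delta> = \<gamma> * kb * m * (\<zeta> / kb)"
    using \<open>0 < kb\<close> by (simp add: Omega_def)
  ultimately have "1 - 4 * (\<zeta> / kb) \<le> sqrt (cmod (lambda2 \<gamma> \<zeta> \<Delta> m))"
    unfolding lambda2_eq_lambda2_Omega
    using \<open>0 \<le> \<Delta>\<close> \<open>\<Delta> < 1\<close> \<open>0 < kb\<close> \<open>0 < \<zeta>\<close> by (intro sqrt_cmod_lambda2_Omega_ge) auto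
  also have "\<dots> \<le> sqrt (lambda2_max n s \<gamma> \<zeta> \<Delta>)"
    using cmod_lambda2_le_lambda2_max[OF j(1), of s] j(2) \<open>0 < m\<close> by simp
  finally show "1 - 4 * \<zeta> / kappa_bar n s \<le> sqrt (lambda2_max n s \<gamma> \<zeta> \<Delta>)"
    by (simp add: kb_def)
qed simp

end
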